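(* Let $x_c\in\mathbb{R}^{n_0}$, $\varepsilon>0$, $\mathcal{X}=\{x:\|x-x_c\|_\infty\le\varepsilon\}$, and let $J:\mathbb{R}^{n_0}\to\mathbb{R}$ be twice continuously differentiable on an open set containing $\mathcal{X}$, with $\|\nabla^2J(x)\|_2\le\lambda$ for all $x\in\mathcal{X}$, where $\lambda>0$. For $y\in\mathcal{X}$ define $$\overline{J}^1(y)=J(y)+\sup_{x\in\mathcal{X}}\Big(\nabla J(y)^\top(x-y)+\frac{\lambda}{2}\|x-y\|_2^2\Big).$$ Let $\hat\delta=\varepsilon\,\mathrm{sign}(\nabla J(x_c))$ (elementwise, with $\mathrm{sign}(0)=0$), and let $y=x_c+\eta\hat\delta$. Then $\overline{J}^1(y)\le\overline{J}^1(x_c)$ for every $$\eta\in\Big[0,\ \min\Big(\min_i\frac{|\nabla J(x_c)_i|}{\lambda(\|\hat\delta\|_2+|\hat\delta_i|)},\,1\Big)\Big],$$ with the convention that if $\nabla J(x_c)=0$ (so $\hat\delta=0$ and $y=x_c$) the inner minimum is read as $+\infty$.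
   Context: $\hat\delta$ equals $x^*(x_c)-x_c$, where $x^*(x_c)=x_c+\varepsilon\,\mathrm{sign}(\nabla J(x_c))$ is the maximizer of the supremum defining $\overline{J}^1(x_c)$ for $p=\infty$. *)

theory Defs
  imports "HOL-Analysis.Analysis"
begin

definition linf_box :: "real^'n \<Rightarrow> real \<Rightarrow> (real^'n) set" where
  "linf_box xc eps = {x. \<forall>i. \<bar>x $ i - xc $ i\<bar> \<le> eps}"

definition Jbar1 :: "(real^'n \<Rightarrow> real) \<Rightarrow> (real^'n \<Rightarrow> real^'n) \<Rightarrow> real \<Rightarrow> (real^'n) set \<Rightarrow> real^'n \<Rightarrow> real" where
  "Jbar1 J gradJ lam X y = J y + (SUP x\<in>X. gradJ y \<bullet> (x - y) + lam / 2 * (norm (x - y))\<^sup>2)"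

definition sign_dir :: "real \<Rightarrow> real^'n \<Rightarrow> real^'n" where
  "sign_dir eps v = (\<chi> i. eps * sgn (v $ i))"

end

theory Submission
  imports Defs
begin

text \<open>Write \<open>g = \<nabla>J(x\<^sub>c)\<close>, \<open>d = \<epsilon> sign g\<close> and \<open>y = x\<^sub>c + \<eta> d\<close>. Choosing the corner
  \<open>x = x\<^sub>c + d\<close> in the supremum gives \<open>J(x\<^sub>c) + g\<^sup>T d + \<lambda>/2 \<parallel>d\<parallel>\<^sup>2 \<le> J\<^sup>1(x\<^sub>c)\<close>. Conversely, the
  Hessian bound makes \<open>\<nabla>J\<close> \<open>\<lambda>\<close>-Lipschitz on the box, so \<open>J(y)\<close> is bounded by its quadratic
  model at \<open>x\<^sub>c\<close>, and \<open>\<nabla>J(y)\<close> differs from \<open>g\<close> by at most \<open>\<lambda>\<eta>\<parallel>d\<parallel>\<close>. The bound on \<open>\<eta>\<close>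
  keeps each product \<open>\<nabla>J(y)\<^sub>i d\<^sub>i\<close> above \<open>\<lambda>\<eta>d\<^sub>i\<^sup>2\<close>, which is exactly what makes the
  separable quadratic in the supremum at \<open>y\<close> still maximal at the same corner \<open>x\<^sub>c + d\<close>.
  Adding up, the coefficients \<open>\<eta>\<^sup>2 + 2\<eta>(1-\<eta>) + (1-\<eta>)\<^sup>2 = 1\<close> collapse the upper bound
  for \<open>J\<^sup>1(y)\<close> to the lower bound for \<open>J\<^sup>1(x\<^sub>c)\<close>.\<close>

lemma linf_box_eq_cbox: "linf_box c eps = cbox (c - (\<chi> i. eps)) (c + (\<chi> i. eps))"
  by (auto simp: linf_box_def mem_box_cart abs_le_iff algebra_simps)

lemma convex_linf_box: "convex (linf_box c eps)"
  by (simp add: linf_box_eq_cbox)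

lemma compact_linf_box: "compact (linf_box c eps)"
  by (simp add: linf_box_eq_cbox)

lemma sign_dir_nth: "sign_dir eps v $ i = eps * sgn (v $ i)"
  by (simp add: sign_dir_def)

lemma sign_dir_zero [simp]: "sign_dir eps 0 = 0"
  by (simp add: vec_eq_iff sign_dir_nth)

lemma sign_dir_eq_0_iff: "0 < eps \<Longrightarrow> sign_dir eps v = 0 \<longleftrightarrow> v = 0"
  by (auto simp: vec_eq_iff sign_dir_nth sgn_eq_0_iff)

lemma abs_sign_dir_nth: "v $ i \<noteq> 0 \<Longrightarrow> 0 \<le> eps \<Longrightarrow> \<bar>sign_dir eps v $ i\<bar> = eps"
  by (simp add: sign_dir_nth abs_mult abs_sgn_eq)

lemma sign_dir_nth_aligned:
  "0 \<le> eps \<Longrightarrow> v $ i * sign_dir eps v $ i = \<bar>v $ i\<bar> * \<bar>sign_dir eps v $ i\<bar>"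
  by (auto simp: sign_dir_nth abs_mult sgn_if)

lemma segment_in_linf_box:
  assumes "\<And>i. \<bar>d $ i\<bar> \<le> eps" "0 \<le> t" "t \<le> 1"
  shows "c + t *\<^sub>R d \<in> linf_box c eps"
proof -
  have "\<bar>t * d $ i\<bar> \<le> eps" for i
    using assms mult_mono[of t 1 "\<bar>d $ i\<bar>" eps] by (simp add: abs_mult)
  then show ?thesis
    by (simp add: linf_box_def)
qed

lemma lipschitz_from_derivative_bound:
  fixes f :: "'a::real_normed_vector \<Rightarrow> 'b::real_normed_vector"
    and f' :: "'a \<Rightarrow> 'a \<Rightarrow>\<^sub>L 'b"
  assumes "convex B"
    and "\<And>z. z \<in> B \<Longrightarrow> (f has_derivative blinfun_apply (f' z)) (at z)"
    and "\<And>z. z \<in> B \<Longrightarrow> norm (f' z) \<le> L"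
    and "x \<in> B" "z \<in> B"
  shows "norm (f z - f x) \<le> L * norm (z - x)"
  using assms
  by (intro differentiable_bound[where f'="\<lambda>z. blinfun_apply (f' z)"])
     (auto simp: norm_blinfun.rep_eq[symmetric] intro: has_derivative_at_withinI)

lemma descent_lemma:
  fixes f :: "'a::real_inner \<Rightarrow> real"
  assumes "convex B" "x \<in> B" "y \<in> B"
    and f': "\<And>z. z \<in> B \<Longrightarrow> (f has_derivative (\<lambda>h. f' z \<bullet> h)) (at z)"
    and lip: "\<And>z. z \<in> B \<Longrightarrow> norm (f' z - f' x) \<le> L * norm (z - x)"
  shows "f y \<le> f x + f' x \<bullet> (y - x) + L / 2 * (norm (y - x))\<^sup>2"
proof -
  define h where "h = y - x"
  define \<psi> where "\<psi> t = f (x + t *\<^sub>R h) - t * (f' x \<bullet> h) - L / 2 * t\<^sup>2 * (norm h)\<^sup>2" for t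
  have "\<psi> 1 \<le> \<psi> 0"
  proof (rule DERIV_nonpos_imp_nonincreasing[where f = \<psi>])
    fix t :: real
    assume t: "0 \<le> t" "t \<le> 1"
    have z: "x + t *\<^sub>R h \<in> B"
      using convexD_alt[OF \<open>convex B\<close> \<open>x \<in> B\<close> \<open>y \<in> B\<close> t] by (simp add: h_def algebra_simps)
    have "((\<lambda>s. x + s *\<^sub>R h) has_derivative (\<lambda>s. s *\<^sub>R h)) (at t)"
      by (auto intro!: derivative_eq_intros)
    from has_derivative_compose[OF this f'[OF z]]
    have "((\<lambda>s. f (x + s *\<^sub>R h)) has_real_derivative f' (x + t *\<^sub>R h) \<bullet> h) (at t)"
      by (rule has_derivative_imp_has_field_derivative) (simp add: mult.commute)
    then have "(\<psi> has_real_derivative (f' (x + t *\<^sub>R h) - f' x) \<bullet> h - L * t * (norm h)\<^sup>2) (at t)"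
      unfolding \<psi>_def by (auto intro!: derivative_eq_intros simp: inner_diff_left)
    moreover have "(f' (x + t *\<^sub>R h) - f' x) \<bullet> h \<le> L * t * (norm h)\<^sup>2"
    proof -
      have "(f' (x + t *\<^sub>R h) - f' x) \<bullet> h \<le> norm (f' (x + t *\<^sub>R h) - f' x) * norm h"
        by (rule norm_cauchy_schwarz)
      also have "\<dots> \<le> L * norm (t *\<^sub>R h) * norm h"
        using lip[OF z] by (simp add: mult_right_mono)
      finally show ?thesis
        using t by (simp add: power2_eq_square mult_ac)
    qed
    ultimately show "\<exists>D. (\<psi> has_real_derivative D) (at t) \<and> D \<le> 0"
      by force
  qed simp
  then show ?thesis
    by (simp add: \<psi>_def h_def)
qed

lemma quadratic_le_at_aligned_endpoint:
  fixes a d u lam eta :: real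
  assumes "\<bar>u\<bar> \<le> \<bar>d\<bar>" "lam * eta * d\<^sup>2 \<le> a * d" "0 \<le> lam"
  shows "a * (u - eta * d) + lam / 2 * (u - eta * d)\<^sup>2
           \<le> a * ((1 - eta) * d) + lam / 2 * ((1 - eta) * d)\<^sup>2"
proof -
  define X where "X = a + lam / 2 * (d + u) - lam * eta * d"
  have gap: "a * ((1 - eta) * d) + lam / 2 * ((1 - eta) * d)\<^sup>2
      - (a * (u - eta * d) + lam / 2 * (u - eta * d)\<^sup>2) = (d - u) * X"
    unfolding X_def power2_eq_square by (simp add: field_simps)
  have ud: "\<bar>u * d\<bar> \<le> d\<^sup>2"
    using mult_right_mono[OF assms(1) abs_ge_zero, of d]
    by (simp add: abs_mult power2_eq_square abs_mult_self_eq)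
  \<comment> \<open>both factors of the gap have the sign of \<open>d\<close>\<close>
  have "0 \<le> (d - u) * d"
    using ud by (simp add: algebra_simps power2_eq_square)
  moreover have "0 \<le> X * d"
  proof -
    have "X * d = a * d - lam * eta * d\<^sup>2 + lam / 2 * (d\<^sup>2 + u * d)"
      by (simp add: X_def algebra_simps power2_eq_square)
    moreover have "0 \<le> d\<^sup>2 + u * d"
      using ud by linarith
    ultimately show ?thesis
      using assms(2,3) by simp
  qed
  ultimately have "0 \<le> ((d - u) * X) * d\<^sup>2"
    by (metis mult.commute mult.left_commute power2_eq_square zero_le_mult_iff)
  moreover have "d = 0 \<Longrightarrow> u = 0"
    using assms(1) by simp
  ultimately have "0 \<le> (d - u) * X"
    by (cases "d = 0") (auto simp: zero_le_mult_iff)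
  with gap show ?thesis
    by linarith
qed

lemma inner_add_norm_sq_eq_sum:
  fixes a v :: "real^'n"
  shows "a \<bullet> v + r * (norm v)\<^sup>2 = (\<Sum>i\<in>UNIV. a $ i * v $ i + r * (v $ i)\<^sup>2)"
proof -
  have "(norm v)\<^sup>2 = (\<Sum>i\<in>UNIV. (v $ i)\<^sup>2)"
    by (simp only: power2_norm_eq_inner inner_vec_def inner_real_def) (simp add: power2_eq_square)
  then show ?thesis
    by (simp add: inner_vec_def sum.distrib sum_distrib_left)
qed

lemma linf_box_quadratic_le_corner:
  fixes a d c x :: "real^'n"
  assumes "x \<in> linf_box c eps" "\<And>i. \<bar>d $ i\<bar> = eps"
    and "\<And>i. lam * eta * (d $ i)\<^sup>2 \<le> a $ i * d $ i" "0 \<le> lam"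
  shows "a \<bullet> (x - (c + eta *\<^sub>R d)) + lam / 2 * (norm (x - (c + eta *\<^sub>R d)))\<^sup>2
           \<le> a \<bullet> ((1 - eta) *\<^sub>R d) + lam / 2 * (norm ((1 - eta) *\<^sub>R d))\<^sup>2"
  unfolding inner_add_norm_sq_eq_sum
proof (rule sum_mono)
  fix i
  have "\<bar>x $ i - c $ i\<bar> \<le> \<bar>d $ i\<bar>"
    using assms(1,2) by (simp add: linf_box_def)
  from quadratic_le_at_aligned_endpoint[OF this, of lam eta "a $ i"] assms(3,4)
  show "a $ i * (x - (c + eta *\<^sub>R d)) $ i + lam / 2 * ((x - (c + eta *\<^sub>R d)) $ i)\<^sup>2
      \<le> a $ i * ((1 - eta) *\<^sub>R d) $ i + lam / 2 * (((1 - eta) *\<^sub>R d) $ i)\<^sup>2"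
    by (simp add: algebra_simps)
qed

lemma aligned_perturbation_ge:
  fixes a g d r c :: real
  assumes "g * d = \<bar>g\<bar> * \<bar>d\<bar>" "\<bar>a - g\<bar> \<le> r" "r + c * \<bar>d\<bar> \<le> \<bar>g\<bar>"
  shows "c * d\<^sup>2 \<le> a * d"
proof -
  have "c * d\<^sup>2 = \<bar>d\<bar> * (c * \<bar>d\<bar>)"
    by (simp add: power2_eq_square abs_mult_self_eq)
  also have "\<dots> \<le> \<bar>d\<bar> * (\<bar>g\<bar> - r)"
    using assms(3) by (intro mult_left_mono) auto
  also have "\<dots> \<le> g * d - \<bar>(a - g) * d\<bar>"
  proof -
    have "\<bar>(a - g) * d\<bar> \<le> r * \<bar>d\<bar>"
      using mult_right_mono[OF assms(2) abs_ge_zero, of d] by (simp add: abs_mult)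
    moreover have "\<bar>d\<bar> * (\<bar>g\<bar> - r) = \<bar>g\<bar> * \<bar>d\<bar> - r * \<bar>d\<bar>"
      by (simp add: algebra_simps)
    ultimately show ?thesis
      using assms(1) by linarith
  qed
  also have "\<dots> \<le> a * d"
    by (simp add: algebra_simps)
  finally show ?thesis .
qed

lemma le_Jbar1_linf_box:
  assumes "x \<in> linf_box c eps"
  shows "J y + gradJ y \<bullet> (x - y) + lam / 2 * (norm (x - y))\<^sup>2
           \<le> Jbar1 J gradJ lam (linf_box c eps) y"
proof -
  have "bdd_above ((\<lambda>x. gradJ y \<bullet> (x - y) + lam / 2 * (norm (x - y))\<^sup>2) ` linf_box c eps)"
    by (intro bounded_imp_bdd_above compact_imp_bounded compact_continuous_image
        continuous_intros compact_linf_box)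
  from cSUP_upper[OF assms this] show ?thesis
    unfolding Jbar1_def by linarith
qed

lemma Jbar1_linf_box_le_corner:
  fixes d :: "real^'n"
  assumes "\<And>i. \<bar>d $ i\<bar> = eps" "\<And>i. lam * eta * (d $ i)\<^sup>2 \<le> gradJ y $ i * d $ i" "0 \<le> lam"
    and "y = c + eta *\<^sub>R d"
  shows "Jbar1 J gradJ lam (linf_box c eps) y
           \<le> J y + (gradJ y \<bullet> ((1 - eta) *\<^sub>R d) + lam / 2 * (norm ((1 - eta) *\<^sub>R d))\<^sup>2)"
proof -
  have "0 \<le> eps"
    by (metis assms(1) abs_ge_zero)
  then have "c \<in> linf_box c eps"
    by (simp add: linf_box_def)
  then show ?thesis
    using linf_box_quadratic_le_corner[OF _ assms(1,2,3)] assms(4)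
    by (auto simp: Jbar1_def intro!: cSUP_least)
qed

lemma Jbar1_step_le_of_estimates:
  fixes J :: "real^'n \<Rightarrow> real" and gradJ :: "real^'n \<Rightarrow> real^'n" and c d :: "real^'n"
    and eps lam eta :: real
  defines "y \<equiv> c + eta *\<^sub>R d"
  assumes abs_d: "\<And>i. \<bar>d $ i\<bar> = eps"
    and aligned: "\<And>i. gradJ c $ i * d $ i = \<bar>gradJ c $ i\<bar> * \<bar>d $ i\<bar>"
    and step: "\<And>i. lam * eta * norm d + lam * eta * \<bar>d $ i\<bar> \<le> \<bar>gradJ c $ i\<bar>"
    and "0 \<le> lam" "0 \<le> eta" "eta \<le> 1"
    and descent: "J y \<le> J c + gradJ c \<bullet> (y - c) + lam / 2 * (norm (y - c))\<^sup>2"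
    and near: "norm (gradJ y - gradJ c) \<le> lam * eta * norm d"
  shows "Jbar1 J gradJ lam (linf_box c eps) y \<le> Jbar1 J gradJ lam (linf_box c eps) c"
proof -
  define g where "g = gradJ c"
  have "lam * eta * (d $ i)\<^sup>2 \<le> gradJ y $ i * d $ i" for i
  proof (rule aligned_perturbation_ge)
    show "\<bar>gradJ y $ i - gradJ c $ i\<bar> \<le> lam * eta * norm d"
      using order_trans[OF component_le_norm_cart near] by simp
  qed (use aligned step in \<open>simp_all add: mult_ac\<close>)
  from Jbar1_linf_box_le_corner[where J = J and gradJ = gradJ and y = y,
      OF abs_d this \<open>0 \<le> lam\<close> meta_eq_to_obj_eq[OF y_def]]
  have upper: "Jbar1 J gradJ lam (linf_box c eps) y
      \<le> J y + (1 - eta) * (gradJ y \<bullet> d) + lam / 2 * (1 - eta)\<^sup>2 * (norm d)\<^sup>2"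
    by (simp add: power_mult_distrib add.assoc mult.assoc)
  have "(gradJ y - g) \<bullet> d \<le> lam * eta * norm d * norm d"
    using norm_cauchy_schwarz[of "gradJ y - g" d] mult_right_mono[OF near norm_ge_zero, of d]
    by (simp add: g_def)
  then have "(1 - eta) * (gradJ y \<bullet> d) \<le> (1 - eta) * (g \<bullet> d + lam * eta * (norm d)\<^sup>2)"
    using \<open>eta \<le> 1\<close> by (intro mult_left_mono) (auto simp: inner_diff_left power2_eq_square)
  moreover have "eta * (g \<bullet> d) + lam / 2 * eta\<^sup>2 * (norm d)\<^sup>2
      + (1 - eta) * (g \<bullet> d + lam * eta * (norm d)\<^sup>2) + lam / 2 * (1 - eta)\<^sup>2 * (norm d)\<^sup>2
      = g \<bullet> d + lam / 2 * (norm d)\<^sup>2"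
    by (simp add: algebra_simps power2_eq_square)
  ultimately have "Jbar1 J gradJ lam (linf_box c eps) y \<le> J c + g \<bullet> d + lam / 2 * (norm d)\<^sup>2"
    using upper descent \<open>0 \<le> eta\<close> by (simp add: y_def g_def power_mult_distrib)
  also have "\<dots> \<le> Jbar1 J gradJ lam (linf_box c eps) c"
    using le_Jbar1_linf_box[OF segment_in_linf_box[of d eps 1 c],
        where J = J and gradJ = gradJ and y = c and lam = lam] abs_d
    by (simp add: g_def)
  finally show ?thesis .
qed

lemma Jbar1_aligned_corner_step_le:
  fixes J :: "real^'n \<Rightarrow> real" and gradJ :: "real^'n \<Rightarrow> real^'n"
    and H :: "real^'n \<Rightarrow> ((real^'n) \<Rightarrow>\<^sub>L (real^'n))" and c d :: "real^'n"
    and eps lam eta :: real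
  assumes box_sub: "linf_box c eps \<subseteq> S"
    and grad: "\<And>x. x \<in> S \<Longrightarrow> (J has_derivative (\<lambda>h. gradJ x \<bullet> h)) (at x)"
    and hess: "\<And>x. x \<in> S \<Longrightarrow> (gradJ has_derivative blinfun_apply (H x)) (at x)"
    and hess_bound: "\<And>x. x \<in> linf_box c eps \<Longrightarrow> norm (H x) \<le> lam"
    and abs_d: "\<And>i. \<bar>d $ i\<bar> = eps"
    and aligned: "\<And>i. gradJ c $ i * d $ i = \<bar>gradJ c $ i\<bar> * \<bar>d $ i\<bar>"
    and step: "\<And>i. lam * eta * norm d + lam * eta * \<bar>d $ i\<bar> \<le> \<bar>gradJ c $ i\<bar>"
    and "0 \<le> lam" "0 \<le> eta" "eta \<le> 1"
  shows "Jbar1 J gradJ lam (linf_box c eps) (c + eta *\<^sub>R d)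
           \<le> Jbar1 J gradJ lam (linf_box c eps) c"
proof -
  have in_box: "c + t *\<^sub>R d \<in> linf_box c eps" if "0 \<le> t" "t \<le> 1" for t
    using segment_in_linf_box[of d eps t c] abs_d that by simp
  have c_in_box: "c \<in> linf_box c eps"
    using in_box[of 0] by simp
  have lip: "norm (gradJ z - gradJ c) \<le> lam * norm (z - c)" if "z \<in> linf_box c eps" for z
    using box_sub c_in_box that
    by (intro lipschitz_from_derivative_bound[OF convex_linf_box, where f' = H])
       (auto intro: hess hess_bound)
  show ?thesis
  proof (rule Jbar1_step_le_of_estimates[where J = J and gradJ = gradJ and c = c and d = d,
        OF abs_d aligned step \<open>0 \<le> lam\<close> \<open>0 \<le> eta\<close> \<open>eta \<le> 1\<close>])
    show "J (c + eta *\<^sub>R d)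
        \<le> J c + gradJ c \<bullet> (c + eta *\<^sub>R d - c) + lam / 2 * (norm (c + eta *\<^sub>R d - c))\<^sup>2"
      using box_sub c_in_box in_box \<open>0 \<le> eta\<close> \<open>eta \<le> 1\<close> lip
      by (intro descent_lemma[OF convex_linf_box]) (auto intro: grad)
    show "norm (gradJ (c + eta *\<^sub>R d) - gradJ c) \<le> lam * eta * norm d"
      using lip[OF in_box[of eta]] \<open>0 \<le> eta\<close> \<open>eta \<le> 1\<close> by (simp add: mult.assoc)
  qed
qed

theorem proposition5:
  fixes J :: "real^'n \<Rightarrow> real"
    and gradJ :: "real^'n \<Rightarrow> real^'n"
    and H :: "real^'n \<Rightarrow> ((real^'n) \<Rightarrow>\<^sub>L (real^'n))"
    and S :: "(real^'n) set"
    and xc :: "real^'n" and eps lam eta :: real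
  assumes eps_pos: "eps > 0"
    and lam_pos: "lam > 0"
    and S_open: "open S"
    and X_sub: "linf_box xc eps \<subseteq> S"
    and grad: "\<And>x. x \<in> S \<Longrightarrow> (J has_derivative (\<lambda>h. gradJ x \<bullet> h)) (at x)"
    and hess: "\<And>x. x \<in> S \<Longrightarrow> (gradJ has_derivative blinfun_apply (H x)) (at x)"
    and hess_cont: "continuous_on S H"
    and hess_bound: "\<And>x. x \<in> linf_box xc eps \<Longrightarrow> norm (H x) \<le> lam"
    and eta_nonneg: "0 \<le> eta"
    and eta_le_one: "eta \<le> 1"
    and eta_le: "gradJ xc \<noteq> 0 \<Longrightarrow>
        \<forall>i. eta \<le> \<bar>gradJ xc $ i\<bar> /
               (lam * (norm (sign_dir eps (gradJ xc)) + \<bar>sign_dir eps (gradJ xc) $ i\<bar>))"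
  shows "Jbar1 J gradJ lam (linf_box xc eps) (xc + eta *\<^sub>R sign_dir eps (gradJ xc))
         \<le> Jbar1 J gradJ lam (linf_box xc eps) xc"
proof (cases "eta = 0 \<or> gradJ xc = 0")
  case True
  then show ?thesis
    by auto
next
  case False
  define g where "g = gradJ xc"
  define d where "d = sign_dir eps g"
  have "d \<noteq> 0"
    using False eps_pos by (simp add: d_def g_def sign_dir_eq_0_iff)
  then have denom_pos: "0 < lam * (norm d + \<bar>d $ i\<bar>)" for i
    using lam_pos by (simp add: add_pos_nonneg)
  have step: "lam * eta * norm d + lam * eta * \<bar>d $ i\<bar> \<le> \<bar>g $ i\<bar>" for i
  proof -
    have "eta \<le> \<bar>g $ i\<bar> / (lam * (norm d + \<bar>d $ i\<bar>))"
      using eta_le False by (simp add: g_def d_def)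
    then show ?thesis
      using denom_pos[of i] by (simp add: pos_le_divide_eq algebra_simps)
  qed
  have "0 < lam * eta * norm d"
    using False eta_nonneg lam_pos \<open>d \<noteq> 0\<close> by simp
  then have "g $ i \<noteq> 0" for i
    using step[of i] lam_pos eta_nonneg by (smt (verit) abs_ge_zero mult_nonneg_nonneg)
  then have "\<bar>d $ i\<bar> = eps" for i
    using eps_pos by (simp add: d_def abs_sign_dir_nth)
  moreover have "g $ i * d $ i = \<bar>g $ i\<bar> * \<bar>d $ i\<bar>" for i
    using eps_pos by (simp add: d_def sign_dir_nth_aligned)
  ultimately show ?thesis
    using Jbar1_aligned_corner_step_le[OF X_sub grad hess hess_bound] step
      lam_pos eta_nonneg eta_le_one
    by (simp add: d_def g_def less_imp_le)
qed

end
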